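(* Let $\mathrm{Min}=\{X\in 2^\omega: X \text{ is of minimal Turing degree}\}$ and suppose $\dim_H(\mathrm{Min})=r$. Then every maximal antichain of Turing degrees has Hausdorff dimension at least $r$.
   Context: $X$ is of minimal degree if $X$ is non-computable and every $Y\le_T X$ is either computable or satisfies $X\le_T Y$. A class $\mathcal B\subseteq 2^\omega$ is an antichain of Turing degrees if (a) $\mathcal B$ contains no computable set; (b) $X\in\mathcal B$ and $Y\equiv_T X$ imply $Y\in\mathcal B$; (c) for all $X,Y\in\mathcal B$ with $X\not\equiv_T Y$, $X\not<_T Y$ and $Y\not<_T X$; it is maximal if for every (non-computable) $W\notin\mathcal B$ the class $\mathcal B\cup\{X:X\equiv_T W\}$ is no longer an antichain. $\dim_H$ is the classical Hausdorff dimension on Cantor space. *)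

theory Defs
  imports Complex_Main "HOL-Library.Extended_Nonnegative_Real"
begin

datatype rf =
    Zero
  | Succ
  | Proj nat
  | Comp rf "rf list"
  | Prec rf rf
  | Mu rf
  | Oracle

inductive eval :: "nat set \<Rightarrow> rf \<Rightarrow> nat list \<Rightarrow> nat \<Rightarrow> bool" for A :: "nat set" where
  eval_zero: "eval A Zero xs 0"
| eval_succ: "eval A Succ (x # xs) (Suc x)"
| eval_proj: "i < length xs \<Longrightarrow> eval A (Proj i) xs (xs ! i)"
| eval_comp: "length ys = length gs \<Longrightarrow> (\<forall>i < length gs. eval A (gs ! i) xs (ys ! i))
     \<Longrightarrow> eval A f ys y \<Longrightarrow> eval A (Comp f gs) xs y"
| eval_prec0: "eval A f xs y \<Longrightarrow> eval A (Prec f g) (0 # xs) y"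
| eval_precS: "eval A (Prec f g) (n # xs) r \<Longrightarrow> eval A g (n # r # xs) y
     \<Longrightarrow> eval A (Prec f g) (Suc n # xs) y"
| eval_mu: "eval A f (n # xs) 0 \<Longrightarrow> (\<forall>m < n. \<exists>k. eval A f (m # xs) (Suc k))
     \<Longrightarrow> eval A (Mu f) xs n"
| eval_oracle: "eval A Oracle (x # xs) (if x \<in> A then 1 else 0)"

text \<open>Sets of naturals are identified with elements of Cantor space 2^omega.\<close>

definition turing_le :: "nat set \<Rightarrow> nat set \<Rightarrow> bool" (infix "\<le>\<^sub>T" 50) where
  "X \<le>\<^sub>T Y \<longleftrightarrow> (\<exists>e. \<forall>n. eval Y e [n] (if n \<in> X then 1 else 0))"

definition turing_eq :: "nat set \<Rightarrow> nat set \<Rightarrow> bool" (infix "\<equiv>\<^sub>T" 50) where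
  "X \<equiv>\<^sub>T Y \<longleftrightarrow> X \<le>\<^sub>T Y \<and> Y \<le>\<^sub>T X"

definition turing_less :: "nat set \<Rightarrow> nat set \<Rightarrow> bool" (infix "<\<^sub>T" 50) where
  "X <\<^sub>T Y \<longleftrightarrow> X \<le>\<^sub>T Y \<and> \<not> Y \<le>\<^sub>T X"

definition computable :: "nat set \<Rightarrow> bool" where
  "computable X \<longleftrightarrow> X \<le>\<^sub>T {}"

definition minimal_degree :: "nat set \<Rightarrow> bool" where
  "minimal_degree X \<longleftrightarrow> \<not> computable X \<and>
     (\<forall>Y. Y \<le>\<^sub>T X \<longrightarrow> computable Y \<or> X \<le>\<^sub>T Y)"

definition Min_deg :: "nat set set" where
  "Min_deg = {X. minimal_degree X}"

definition antichain :: "nat set set \<Rightarrow> bool" where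
  "antichain B \<longleftrightarrow>
     (\<forall>X\<in>B. \<not> computable X) \<and>
     (\<forall>X Y. X \<in> B \<and> Y \<equiv>\<^sub>T X \<longrightarrow> Y \<in> B) \<and>
     (\<forall>X\<in>B. \<forall>Y\<in>B. \<not> X \<equiv>\<^sub>T Y \<longrightarrow> \<not> X <\<^sub>T Y \<and> \<not> Y <\<^sub>T X)"

definition maximal_antichain :: "nat set set \<Rightarrow> bool" where
  "maximal_antichain B \<longleftrightarrow> antichain B \<and>
     (\<forall>W. \<not> computable W \<and> W \<notin> B \<longrightarrow> \<not> antichain (B \<union> {X. X \<equiv>\<^sub>T W}))"

text \<open>Cantor space with the metric d(X,Y) = 2^(-min{i. X i differs from Y i}).
  Every set of diameter at most 2^(-n) lies in a cylinder of length n, whose diameter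
  is 2^(-n); hence the s-dimensional Hausdorff measure is computed exactly by
  countable covers by cylinders.\<close>

definition cyl :: "bool list \<Rightarrow> nat set set" where
  "cyl \<sigma> = {X. \<forall>i < length \<sigma>. (i \<in> X) = \<sigma> ! i}"

definition hausdorff_measure :: "real \<Rightarrow> nat set set \<Rightarrow> ennreal" where
  "hausdorff_measure s A =
     (SUP n::nat. INF c \<in> {c :: nat \<Rightarrow> bool list.
          A \<subseteq> (\<Union>i. cyl (c i)) \<and> (\<forall>i. n \<le> length (c i))}.
        (\<Sum>i. ennreal (2 powr (- s * real (length (c i))))))"

definition dim_H :: "nat set set \<Rightarrow> real" where
  "dim_H A = Inf {s. 0 \<le> s \<and> hausdorff_measure s A = 0}"

end

theory Submission
  imports Defs "HOL-Library.Log_Nat"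
begin

(* Every set X of minimal degree is computable from some member W of a maximal antichain B:
  otherwise the degree of X is incomparable with all of B and could be added to it.  Write W on
  the positions 2^k and X on all other positions; the resulting set Z is Turing equivalent to W,
  hence lies in B, and X is read off Z.  The positions 2^k have density zero, so deleting them
  turns a cylinder of length L into one of length L - O(log L); therefore, for all t > s, covers
  witnessing that B is s-null yield covers witnessing that the set of such X is t-null, and
  dim_H Min_deg <= dim_H B. *)

lemma eval_ProjI: "i < length xs \<Longrightarrow> xs ! i = y \<Longrightarrow> eval A (Proj i) xs y"
  using eval_proj by blast

lemma eval_SuccI: "y = Suc x \<Longrightarrow> eval A Succ (x # xs) y"
  using eval_succ by blast

lemma eval_Comp1: "eval A g xs y1 \<Longrightarrow> eval A f [y1] y \<Longrightarrow> eval A (Comp f [g]) xs y"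
  by (rule eval_comp[of "[y1]"]) auto

lemma eval_Comp2:
  "eval A g1 xs y1 \<Longrightarrow> eval A g2 xs y2 \<Longrightarrow> eval A f [y1, y2] y
    \<Longrightarrow> eval A (Comp f [g1, g2]) xs y"
  by (rule eval_comp[of "[y1, y2]"]) (auto simp: less_Suc_eq nth_Cons')

lemma eval_Comp3:
  "eval A g1 xs y1 \<Longrightarrow> eval A g2 xs y2 \<Longrightarrow> eval A g3 xs y3 \<Longrightarrow> eval A f [y1, y2, y3] y
    \<Longrightarrow> eval A (Comp f [g1, g2, g3]) xs y"
  by (rule eval_comp[of "[y1, y2, y3]"]) (auto simp: less_Suc_eq nth_Cons')

definition double_rf :: rf where
  "double_rf = Prec Zero (Comp Succ [Comp Succ [Proj 1]])"

lemma eval_double_rf: "eval A double_rf [m] (2 * m)"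
proof (induction m)
  case 0
  show ?case unfolding double_rf_def using eval_prec0[OF eval_zero] by simp
next
  case (Suc m)
  have "eval A (Comp Succ [Comp Succ [Proj 1]]) [m, 2 * m] (2 * Suc m)"
    by (rule eval_Comp1[OF eval_Comp1[OF eval_ProjI eval_SuccI] eval_SuccI]) auto
  with Suc show ?case unfolding double_rf_def by (rule eval_precS)
qed

definition pow2_rf :: rf where
  "pow2_rf = Prec (Comp Succ [Zero]) (Comp double_rf [Proj 1])"

lemma eval_pow2_rf: "eval A pow2_rf [m] (2 ^ m)"
proof (induction m)
  case 0
  show ?case unfolding pow2_rf_def
    using eval_prec0[OF eval_Comp1[OF eval_zero eval_SuccI]] by simp
next
  case (Suc m)
  have "eval A (Comp double_rf [Proj 1]) [m, 2 ^ m] (2 ^ Suc m)"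
    by (rule eval_Comp1[OF eval_ProjI]) (auto intro: eval_double_rf)
  with Suc show ?case unfolding pow2_rf_def by (rule eval_precS)
qed

definition pred_rf :: rf where
  "pred_rf = Prec Zero (Proj 0)"

lemma eval_pred_rf: "eval A pred_rf [m] (m - 1)"
proof (induction m)
  case 0
  show ?case unfolding pred_rf_def using eval_prec0[OF eval_zero] by simp
next
  case (Suc k)
  then show ?case unfolding pred_rf_def by (rule eval_precS) (auto intro: eval_ProjI)
qed

definition sub_rf :: rf where
  "sub_rf = Prec (Proj 0) (Comp pred_rf [Proj 1])"

lemma eval_sub_rf: "eval A sub_rf [b, a] (a - b)"
proof (induction b)
  case 0
  show ?case unfolding sub_rf_def by (auto intro!: eval_prec0 eval_ProjI)
next
  case (Suc b)
  have "eval A (Comp pred_rf [Proj 1]) [b, a - b, a] (a - Suc b)"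
    using eval_pred_rf[of A "a - b"] by (intro eval_Comp1[OF eval_ProjI]) auto
  with Suc show ?case unfolding sub_rf_def by (rule eval_precS)
qed

definition ifpos_rf :: rf where
  "ifpos_rf = Prec (Proj 1) (Proj 2)"

lemma eval_ifpos_rf: "eval A ifpos_rf [b, u, v] (if 0 < b then u else v)"
proof (induction b)
  case 0
  show ?case unfolding ifpos_rf_def by (auto intro!: eval_prec0 eval_ProjI)
next
  case (Suc b)
  then show ?case unfolding ifpos_rf_def by (auto intro!: eval_precS eval_ProjI)
qed

lemma pow2_less_if_less_ceillog2: "m < ceillog2 n \<Longrightarrow> 2 ^ m < n"
  using ceillog2_le_iff[of n m] by (cases "n = 0") auto

definition ceillog2_rf :: rf where
  "ceillog2_rf = Mu (Comp sub_rf [Comp pow2_rf [Proj 0], Proj 1])"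

lemma eval_ceillog2_rf: "eval A ceillog2_rf [n] (ceillog2 n)"
  unfolding ceillog2_rf_def
proof (rule eval_mu)
  have search: "eval A (Comp sub_rf [Comp pow2_rf [Proj 0], Proj 1]) [m, n] (n - 2 ^ m)" for m
    by (rule eval_Comp2[OF eval_Comp1[OF eval_ProjI eval_pow2_rf] eval_ProjI eval_sub_rf]) auto
  show "eval A (Comp sub_rf [Comp pow2_rf [Proj 0], Proj 1]) [ceillog2 n, n] 0"
    using search[of "ceillog2 n"] le_two_power_ceillog2[of n] by simp
  show "\<forall>m < ceillog2 n. \<exists>k. eval A (Comp sub_rf [Comp pow2_rf [Proj 0], Proj 1]) [m, n] (Suc k)"
  proof (intro allI impI)
    fix m assume "m < ceillog2 n"
    then have "n - 2 ^ m = Suc (n - 2 ^ m - 1)"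
      using pow2_less_if_less_ceillog2 by fastforce
    then show "\<exists>k. eval A (Comp sub_rf [Comp pow2_rf [Proj 0], Proj 1]) [m, n] (Suc k)"
      using search[of m] by metis
  qed
qed

fun relativize :: "rf \<Rightarrow> rf \<Rightarrow> rf" where
  "relativize p Oracle = Comp p [Proj 0]"
| "relativize p (Comp f gs) = Comp (relativize p f) (map (relativize p) gs)"
| "relativize p (Prec f g) = Prec (relativize p f) (relativize p g)"
| "relativize p (Mu f) = Mu (relativize p f)"
| "relativize p Zero = Zero"
| "relativize p Succ = Succ"
| "relativize p (Proj i) = Proj i"

lemma eval_relativize:
  assumes "eval Y e xs y" and p: "\<And>n. eval W p [n] (if n \<in> Y then 1 else 0)"
  shows "eval W (relativize p e) xs y"
  using assms(1)
proof (induction rule: eval.induct)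
  case (eval_comp ys gs xs f y)
  then show ?case by (auto intro!: eval.eval_comp)
next
  case (eval_oracle x xs)
  have "eval W (Proj 0) (x # xs) x"
    by (rule eval_ProjI) auto
  then show ?case
    unfolding relativize.simps by (rule eval_Comp1[OF _ p])
qed (auto intro: eval.intros)

lemma turing_le_trans: "X \<le>\<^sub>T Y \<Longrightarrow> Y \<le>\<^sub>T W \<Longrightarrow> X \<le>\<^sub>T W"
  unfolding turing_le_def using eval_relativize by blast

lemma turing_le_refl: "X \<le>\<^sub>T X"
  unfolding turing_le_def using eval_oracle by blast

lemma computable_if_turing_le: "X \<le>\<^sub>T Y \<Longrightarrow> computable Y \<Longrightarrow> computable X"
  unfolding computable_def using turing_le_trans by blast

section \<open>A join hiding one set on a sparse set of positions\<close>

(* For n not a power of two, ceillog2 n counts the powers of two below n, so n - ceillog2 n is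
  the index of n among the non-powers of two. *)
definition sparse_join :: "nat set \<Rightarrow> nat set \<Rightarrow> nat set" where
  "sparse_join X Y = {n. if 2 ^ ceillog2 n = n then ceillog2 n \<in> Y else n - ceillog2 n \<in> X}"

lemma sparse_join_le:
  assumes "X \<le>\<^sub>T Y"
  shows "sparse_join X Y \<le>\<^sub>T Y"
proof -
  obtain e where e: "\<And>n. eval Y e [n] (if n \<in> X then 1 else 0)"
    using assms unfolding turing_le_def by blast
  let ?p = "Comp ifpos_rf [Comp sub_rf [Proj 0, Comp pow2_rf [ceillog2_rf]],
    Comp e [Comp sub_rf [ceillog2_rf, Proj 0]], Comp Oracle [ceillog2_rf]]"
  have "eval Y ?p [n] (if n \<in> sparse_join X Y then 1 else 0)" for n
  proof (rule eval_Comp3)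
    show "eval Y (Comp sub_rf [Proj 0, Comp pow2_rf [ceillog2_rf]]) [n] (2 ^ ceillog2 n - n)"
      by (rule eval_Comp2[OF eval_ProjI eval_Comp1[OF eval_ceillog2_rf eval_pow2_rf] eval_sub_rf])
        auto
    show "eval Y (Comp e [Comp sub_rf [ceillog2_rf, Proj 0]]) [n]
        (if n - ceillog2 n \<in> X then 1 else 0)"
      by (rule eval_Comp1[OF eval_Comp2[OF eval_ceillog2_rf eval_ProjI eval_sub_rf] e]) auto
    show "eval Y (Comp Oracle [ceillog2_rf]) [n] (if ceillog2 n \<in> Y then 1 else 0)"
      by (rule eval_Comp1[OF eval_ceillog2_rf eval_oracle])
    have branch: "(if 0 < 2 ^ ceillog2 n - n then if n - ceillog2 n \<in> X then 1 else 0
           else if ceillog2 n \<in> Y then 1 else 0)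
        = (if n \<in> sparse_join X Y then 1 else (0::nat))"
      using le_two_power_ceillog2[of n] unfolding sparse_join_def by auto
    show "eval Y ifpos_rf [2 ^ ceillog2 n - n, if n - ceillog2 n \<in> X then 1 else 0,
        if ceillog2 n \<in> Y then 1 else 0] (if n \<in> sparse_join X Y then 1 else 0)"
      unfolding branch[symmetric] by (rule eval_ifpos_rf)
  qed
  then show ?thesis
    unfolding turing_le_def by blast
qed

lemma le_sparse_join: "Y \<le>\<^sub>T sparse_join X Y"
proof -
  have "eval (sparse_join X Y) (Comp Oracle [pow2_rf]) [k] (if k \<in> Y then 1 else 0)" for k
  proof (rule eval_Comp1[OF eval_pow2_rf])
    have "(2 ^ k \<in> sparse_join X Y) = (k \<in> Y)"
      by (simp add: sparse_join_def)
    then show "eval (sparse_join X Y) Oracle [2 ^ k] (if k \<in> Y then 1 else 0)"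
      using eval_oracle[of "sparse_join X Y" "2 ^ k" "[]"] by simp
  qed
  then show ?thesis
    unfolding turing_le_def by blast
qed

lemma sparse_join_turing_eq: "X \<le>\<^sub>T Y \<Longrightarrow> sparse_join X Y \<equiv>\<^sub>T Y"
  unfolding turing_eq_def using sparse_join_le le_sparse_join by blast

section \<open>Minimal degrees below a maximal antichain\<close>

lemma antichain_Un_degree:
  assumes B: "antichain B" and X: "\<not> computable X"
    and incomparable: "\<And>W. W \<in> B \<Longrightarrow> \<not> W <\<^sub>T X \<and> \<not> X <\<^sub>T W"
  shows "antichain (B \<union> {Z. Z \<equiv>\<^sub>T X})"
proof -
  have new_incomparable: "\<not> W <\<^sub>T Z \<and> \<not> Z <\<^sub>T W" if "W \<in> B" "Z \<equiv>\<^sub>T X" for W Z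
    using incomparable[OF \<open>W \<in> B\<close>] \<open>Z \<equiv>\<^sub>T X\<close> turing_le_trans
    unfolding turing_less_def turing_eq_def by blast
  have "\<not> computable Z" if "Z \<in> B \<union> {Z. Z \<equiv>\<^sub>T X}" for Z
    using that B X computable_if_turing_le unfolding antichain_def turing_eq_def by blast
  moreover have "V \<in> B \<union> {Z. Z \<equiv>\<^sub>T X}" if "Z \<in> B \<union> {Z. Z \<equiv>\<^sub>T X}" "V \<equiv>\<^sub>T Z" for Z V
    using that B turing_le_trans unfolding antichain_def turing_eq_def by blast
  moreover have "\<not> Z <\<^sub>T V \<and> \<not> V <\<^sub>T Z"
    if "Z \<in> B \<union> {Z. Z \<equiv>\<^sub>T X}" "V \<in> B \<union> {Z. Z \<equiv>\<^sub>T X}" "\<not> Z \<equiv>\<^sub>T V" for Z V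
    using that B new_incomparable turing_le_trans unfolding antichain_def turing_eq_def by blast
  ultimately show ?thesis
    unfolding antichain_def by blast
qed

lemma minimal_degree_incomparable:
  assumes "antichain B" "minimal_degree X" "\<forall>W\<in>B. \<not> X \<le>\<^sub>T W" "W \<in> B"
  shows "\<not> W <\<^sub>T X \<and> \<not> X <\<^sub>T W"
  using assms unfolding antichain_def minimal_degree_def turing_less_def by blast

lemma maximal_antichain_above_minimal_degree:
  assumes B: "maximal_antichain B" and X: "minimal_degree X"
  shows "\<exists>W\<in>B. X \<le>\<^sub>T W"
proof (rule ccontr)
  assume below_none: "\<not> (\<exists>W\<in>B. X \<le>\<^sub>T W)"
  then have "X \<notin> B"
    using turing_le_refl by blast
  have "antichain B" "\<not> computable X"
    using B X unfolding maximal_antichain_def minimal_degree_def by blast+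
  then have "antichain (B \<union> {Z. Z \<equiv>\<^sub>T X})"
    using antichain_Un_degree minimal_degree_incomparable X below_none by blast
  with B \<open>X \<notin> B\<close> \<open>\<not> computable X\<close> show False
    unfolding maximal_antichain_def by blast
qed

lemma Min_deg_subset_sparse_join_preimage:
  assumes "maximal_antichain B"
  shows "Min_deg \<subseteq> {X. \<exists>Y. sparse_join X Y \<in> B}"
proof
  fix X assume "X \<in> Min_deg"
  then obtain W where "W \<in> B" "X \<le>\<^sub>T W"
    using maximal_antichain_above_minimal_degree[OF assms] unfolding Min_deg_def by blast
  then have "sparse_join X W \<in> B"
    using sparse_join_turing_eq assms unfolding maximal_antichain_def antichain_def by blast
  then show "X \<in> {X. \<exists>Y. sparse_join X Y \<in> B}"
    by blast
qed

section \<open>Hausdorff measure and dimension\<close>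

lemma hausdorff_measure_eq_0I:
  assumes "\<And>n e. 0 < e \<Longrightarrow> \<exists>c. A \<subseteq> (\<Union>i. cyl (c i)) \<and> (\<forall>i. n \<le> length (c i)) \<and>
     (\<Sum>i. ennreal (2 powr (- s * real (length (c i))))) \<le> ennreal e"
  shows "hausdorff_measure s A = 0"
proof -
  have levels_0: "(INF c \<in> {c. A \<subseteq> (\<Union>i. cyl (c i)) \<and> (\<forall>i. n \<le> length (c i))}.
      \<Sum>i. ennreal (2 powr (- s * real (length (c i))))) = 0" for n
  proof (rule antisym[OF ennreal_le_epsilon zero_le])
    fix e :: real assume "0 < e"
    then obtain c where "A \<subseteq> (\<Union>i. cyl (c i)) \<and> (\<forall>i. n \<le> length (c i))"
      "(\<Sum>i. ennreal (2 powr (- s * real (length (c i))))) \<le> ennreal e"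
      using assms by blast
    then show "(INF c \<in> {c. A \<subseteq> (\<Union>i. cyl (c i)) \<and> (\<forall>i. n \<le> length (c i))}.
        \<Sum>i. ennreal (2 powr (- s * real (length (c i))))) \<le> 0 + ennreal e"
      by (intro INF_lower2[of c]) auto
  qed
  show ?thesis
    unfolding hausdorff_measure_def levels_0 by simp
qed

lemma hausdorff_measure_eq_0D:
  assumes "hausdorff_measure s A = 0" "0 < e"
  shows "\<exists>c. A \<subseteq> (\<Union>i. cyl (c i)) \<and> (\<forall>i. n \<le> length (c i)) \<and>
     (\<Sum>i. ennreal (2 powr (- s * real (length (c i))))) < ennreal e"
proof -
  have "(INF c \<in> {c. A \<subseteq> (\<Union>i. cyl (c i)) \<and> (\<forall>i. n \<le> length (c i))}.
      \<Sum>i. ennreal (2 powr (- s * real (length (c i))))) \<le> hausdorff_measure s A"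
    unfolding hausdorff_measure_def by (rule SUP_upper) simp
  with assms have "(INF c \<in> {c. A \<subseteq> (\<Union>i. cyl (c i)) \<and> (\<forall>i. n \<le> length (c i))}.
      \<Sum>i. ennreal (2 powr (- s * real (length (c i))))) < ennreal e"
    by simp
  then show ?thesis
    unfolding INF_less_iff by blast
qed

lemma hausdorff_measure_mono: "A \<subseteq> A' \<Longrightarrow> hausdorff_measure s A \<le> hausdorff_measure s A'"
  unfolding hausdorff_measure_def by (intro SUP_mono' INF_superset_mono) auto

lemma cyl_cover_of_lengths:
  "\<exists>c. UNIV \<subseteq> (\<Union>i. cyl (c i)) \<and> (\<forall>i. length (c i) = (if i < 2 ^ m then m else m + i))"
proof -
  define prefixes where "prefixes = List.n_lists m [False, True]"
  have length_prefixes: "length prefixes = 2 ^ m"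
    unfolding prefixes_def length_n_lists by (simp add: numeral_2_eq_2)
  define c where "c i = (if i < 2 ^ m then prefixes ! i else replicate (m + i) True)" for i
  have "X \<in> (\<Union>i. cyl (c i))" for X
  proof -
    define \<sigma> where "\<sigma> = map (\<lambda>k. k \<in> X) [0..<m]"
    have "\<sigma> \<in> set prefixes"
      unfolding prefixes_def \<sigma>_def set_n_lists by auto
    then obtain i where "i < 2 ^ m" "prefixes ! i = \<sigma>"
      unfolding in_set_conv_nth length_prefixes by auto
    moreover have "X \<in> cyl \<sigma>"
      unfolding cyl_def \<sigma>_def by simp
    ultimately have "X \<in> cyl (c i)"
      unfolding c_def by simp
    then show ?thesis
      by blast
  qed
  moreover have "length (c i) = (if i < 2 ^ m then m else m + i)" for i
  proof (cases "i < 2 ^ m")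
    case True
    then have "prefixes ! i \<in> set prefixes"
      using length_prefixes by simp
    with True show ?thesis
      unfolding c_def prefixes_def by (simp add: length_n_lists_elem)
  qed (simp add: c_def)
  ultimately show ?thesis
    by blast
qed

lemma suminf_cover_of_lengths_le:
  "(\<Sum>i. ennreal (2 powr (- 2 * real (if i < 2 ^ m then m else m + i))))
    \<le> ennreal (3 * (1/2) ^ m)"
proof -
  define g :: "nat \<Rightarrow> real"
    where "g i = (if i < 2 ^ m then (1/4) ^ m else 0) + (1/2) ^ m * (1/2) ^ i" for i
  have "(2::real) ^ m * (1/4) ^ m = (1/2) ^ m"
    by (simp flip: power_mult_distrib)
  then have "g sums (3 * (1/2) ^ m)"
    using sums_add[OF sums_If_finite_set[of "{..<2 ^ m}" "\<lambda>_. (1/4::real) ^ m"]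
        sums_mult[OF geometric_sums[of "1/2::real"], of "(1/2) ^ m"]]
    unfolding g_def by (simp add: lessThan_def)
  then have "summable g" "suminf g = 3 * (1/2) ^ m"
    by (auto simp: sums_iff)
  have quarter: "(2::real) powr (- 2 * real k) = (1/4) ^ k" for k
    by (simp add: powr_minus powr_realpow[symmetric] power_mult power_one_over inverse_eq_divide
        flip: powr_powr)
  have "(\<Sum>i. ennreal (2 powr (- 2 * real (if i < 2 ^ m then m else m + i))))
      \<le> (\<Sum>i. ennreal (g i))"
  proof (intro suminf_le summableI ennreal_leI)
    fix i
    have "(1/4::real) ^ (m + i) \<le> (1/2) ^ m * (1/2) ^ i"
      unfolding power_add[symmetric] by (intro power_mono) auto
    then show "2 powr (- 2 * real (if i < 2 ^ m then m else m + i)) \<le> g i"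
      unfolding quarter g_def by auto
  qed
  also have "\<dots> = ennreal (suminf g)"
    by (intro suminf_ennreal2[OF _ \<open>summable g\<close>]) (simp add: g_def)
  finally show ?thesis
    unfolding \<open>suminf g = 3 * (1/2) ^ m\<close> .
qed

lemma hausdorff_measure_2_eq_0: "hausdorff_measure 2 A = 0"
proof (rule hausdorff_measure_eq_0I)
  fix n and e :: real assume "0 < e"
  obtain m0 where m0: "(1/2::real) ^ m0 < e / 3"
    using real_arch_pow_inv[of "e / 3" "1/2"] \<open>0 < e\<close> by auto
  define m where "m = max m0 n"
  have "(1/2::real) ^ m \<le> (1/2) ^ m0"
    unfolding m_def by (rule power_decreasing) auto
  with m0 have "ennreal (3 * (1/2) ^ m) \<le> ennreal e"
    by (intro ennreal_leI) linarith
  obtain c where "UNIV \<subseteq> (\<Union>i. cyl (c i))"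
    and length_c: "\<And>i. length (c i) = (if i < 2 ^ m then m else m + i)"
    using cyl_cover_of_lengths by blast
  moreover have "n \<le> length (c i)" for i
    unfolding length_c m_def by auto
  moreover have "(\<Sum>i. ennreal (2 powr (- 2 * real (length (c i))))) \<le> ennreal e"
    unfolding length_c using suminf_cover_of_lengths_le \<open>ennreal (3 * (1/2) ^ m) \<le> ennreal e\<close>
    by (rule order_trans)
  ultimately show "\<exists>c. A \<subseteq> (\<Union>i. cyl (c i)) \<and> (\<forall>i. n \<le> length (c i)) \<and>
      (\<Sum>i. ennreal (2 powr (- 2 * real (length (c i))))) \<le> ennreal e"
    by blast
qed

definition null_exponents :: "nat set set \<Rightarrow> real set" where
  "null_exponents A = {s. 0 \<le> s \<and> hausdorff_measure s A = 0}"

lemma dim_H_eq_Inf_null_exponents: "dim_H A = Inf (null_exponents A)"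
  unfolding dim_H_def null_exponents_def ..

lemma two_in_null_exponents: "2 \<in> null_exponents A"
  unfolding null_exponents_def using hausdorff_measure_2_eq_0 by simp

lemma bdd_below_null_exponents: "bdd_below (null_exponents A)"
  unfolding null_exponents_def by (rule bdd_belowI[of _ 0]) auto

lemma dim_H_mono:
  assumes "A \<subseteq> A'"
  shows "dim_H A \<le> dim_H A'"
proof -
  have "null_exponents A' \<subseteq> null_exponents A"
    using hausdorff_measure_mono[OF assms] unfolding null_exponents_def
    by (metis (mono_tags, lifting) le_zero_eq mem_Collect_eq subsetI)
  then show ?thesis
    unfolding dim_H_eq_Inf_null_exponents
    using two_in_null_exponents bdd_below_null_exponents by (intro cInf_superset_mono) auto
qed

lemma dim_H_leI:
  assumes "\<And>s t. s \<in> null_exponents B \<Longrightarrow> s < t \<Longrightarrow> t \<in> null_exponents A"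
  shows "dim_H A \<le> dim_H B"
  unfolding dim_H_eq_Inf_null_exponents
proof (rule cInf_greatest)
  show "null_exponents B \<noteq> {}"
    using two_in_null_exponents by blast
  fix s assume "s \<in> null_exponents B"
  show "Inf (null_exponents A) \<le> s"
  proof (rule field_le_epsilon)
    fix e :: real assume "0 < e"
    then have "s + e \<in> null_exponents A"
      using assms \<open>s \<in> null_exponents B\<close> by simp
    then show "Inf (null_exponents A) \<le> s + e"
      using bdd_below_null_exponents by (rule cInf_lower)
  qed
qed

section \<open>Deleting the sparse positions\<close>

lemma length_filter_upt_nth:
  "j < length (filter P [0..<L]) \<Longrightarrow> length (filter P [0..<filter P [0..<L] ! j]) = j"
proof (induction L)
  case 0
  then show ?case by simp
next
  case (Suc L)
  show ?case
  proof (cases "j < length (filter P [0..<L])")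
    case True
    with Suc show ?thesis by (simp add: nth_append)
  next
    case False
    with Suc.prems have "P L" "j = length (filter P [0..<L])"
      by (auto split: if_splits)
    then show ?thesis by (simp add: nth_append)
  qed
qed

lemma length_filter_pow2_upt: "length (filter (\<lambda>m. 2 ^ ceillog2 m = m) [0..<n]) = ceillog2 n"
proof -
  have "{m. 2 ^ ceillog2 m = m} \<inter> {0..<n} = (\<lambda>k. 2 ^ k) ` {..<ceillog2 n}"
  proof (intro set_eqI iffI)
    fix m :: nat assume "m \<in> {m. 2 ^ ceillog2 m = m} \<inter> {0..<n}"
    then have "2 ^ ceillog2 m = m" "m < n" by auto
    then have "ceillog2 m < ceillog2 n"
      using ceillog2_le_iff[of n "ceillog2 m"] by (cases "n = 0") auto
    with \<open>2 ^ ceillog2 m = m\<close> show "m \<in> (\<lambda>k. 2 ^ k) ` {..<ceillog2 n}"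
      by (metis imageI lessThan_iff)
  next
    fix m :: nat assume "m \<in> (\<lambda>k. 2 ^ k) ` {..<ceillog2 n}"
    then show "m \<in> {m. 2 ^ ceillog2 m = m} \<inter> {0..<n}"
      using pow2_less_if_less_ceillog2 by auto
  qed
  moreover have "inj_on (\<lambda>k. 2 ^ k :: nat) {..<ceillog2 n}"
    by (auto intro: inj_onI)
  ultimately show ?thesis
    by (simp add: distinct_length_filter card_image)
qed

lemma length_filter_not_pow2_upt:
  "length (filter (\<lambda>m. 2 ^ ceillog2 m \<noteq> m) [0..<n]) = n - ceillog2 n"
  using sum_length_filter_compl[of "\<lambda>m. 2 ^ ceillog2 m = m" "[0..<n]"]
    length_filter_pow2_upt[of n] by simp

definition strip_sparse :: "bool list \<Rightarrow> bool list" where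
  "strip_sparse \<sigma> = map (nth \<sigma>) (filter (\<lambda>m. 2 ^ ceillog2 m \<noteq> m) [0..<length \<sigma>])"

lemma length_strip_sparse: "length (strip_sparse \<sigma>) = length \<sigma> - ceillog2 (length \<sigma>)"
  unfolding strip_sparse_def by (simp add: length_filter_not_pow2_upt)

lemma sparse_join_in_cyl_imp: "sparse_join X Y \<in> cyl \<sigma> \<Longrightarrow> X \<in> cyl (strip_sparse \<sigma>)"
  unfolding cyl_def
proof (intro CollectI allI impI)
  fix j assume Z: "sparse_join X Y \<in> {X. \<forall>i<length \<sigma>. (i \<in> X) = \<sigma> ! i}"
    and j: "j < length (strip_sparse \<sigma>)"
  define F where "F = filter (\<lambda>m. 2 ^ ceillog2 m \<noteq> m) [0..<length \<sigma>]"
  define m where "m = F ! j"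
  have "j < length F"
    using j unfolding strip_sparse_def F_def by simp
  then have "m \<in> set F"
    unfolding m_def by simp
  then have "2 ^ ceillog2 m \<noteq> m" "m < length \<sigma>"
    unfolding F_def by auto
  have "m - ceillog2 m = j"
    using length_filter_upt_nth[OF \<open>j < length F\<close>[unfolded F_def]]
    unfolding m_def F_def length_filter_not_pow2_upt .
  have "strip_sparse \<sigma> ! j = \<sigma> ! m"
    unfolding strip_sparse_def m_def F_def using \<open>j < length F\<close> F_def by simp
  also have "\<dots> = (m \<in> sparse_join X Y)"
    using Z \<open>m < length \<sigma>\<close> by auto
  also have "\<dots> = (j \<in> X)"
    using \<open>2 ^ ceillog2 m \<noteq> m\<close> \<open>m - ceillog2 m = j\<close> unfolding sparse_join_def by simp
  finally show "(j \<in> X) = strip_sparse \<sigma> ! j"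
    by simp
qed

lemma eventually_ceillog2_le:
  fixes d :: real
  assumes "0 < d"
  shows "eventually (\<lambda>L. real (ceillog2 L) \<le> d * real L) sequentially"
proof -
  have "((\<lambda>x::real. ln x / x / ln 2 + inverse x) \<longlongrightarrow> 0 / ln 2 + 0) at_top"
    by (intro tendsto_intros ln_x_over_x_tendsto_0 tendsto_inverse_0_at_top filterlim_ident)
      auto
  then have "((\<lambda>L. ln (real L) / real L / ln 2 + inverse (real L)) \<longlongrightarrow> 0) sequentially"
    using filterlim_compose[OF _ filterlim_real_sequentially] by simp
  then have "eventually (\<lambda>L. ln (real L) / real L / ln 2 + inverse (real L) < d) sequentially"
    using assms by (rule order_tendstoD)
  with eventually_gt_at_top[of 0] show ?thesis
  proof eventually_elim
    case (elim L)
    then have "log 2 (real L) + 1 = real L * (ln (real L) / real L / ln 2 + inverse (real L))"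
      by (simp add: log_def field_simps)
    also have "\<dots> \<le> d * real L"
      using elim by (simp add: mult.commute)
    finally show ?case
      using ceillog2_less_log[of L] elim by linarith
  qed
qed

lemma stripped_length_bounds:
  fixes s t :: real
  assumes "0 < t" and small: "real (ceillog2 L) \<le> min ((t - s) / t) (1/2) * real L"
  shows "2 * ceillog2 L \<le> L" and "- t * real (L - ceillog2 L) \<le> - s * real L"
proof -
  define d where "d = min ((t - s) / t) (1/2)"
  have "d \<le> 1/2" "t * d \<le> t - s"
    using \<open>0 < t\<close> unfolding d_def by (auto simp: min_def field_simps)
  then have "real (2 * ceillog2 L) \<le> real L"
    using small mult_right_mono[of d "1/2" "real L"] unfolding d_def by simp
  then show "2 * ceillog2 L \<le> L"
    by (simp only: of_nat_le_iff)
  have "t * real (ceillog2 L) \<le> (t * d) * real L"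
    using small \<open>0 < t\<close> unfolding d_def by (simp add: mult.assoc)
  also have "\<dots> \<le> (t - s) * real L"
    using \<open>t * d \<le> t - s\<close> by (simp add: mult_right_mono)
  finally show "- t * real (L - ceillog2 L) \<le> - s * real L"
    using \<open>2 * ceillog2 L \<le> L\<close> by (simp add: of_nat_diff algebra_simps)
qed

lemma hausdorff_measure_sparse_join_preimage:
  assumes null: "hausdorff_measure s B = 0" and "0 \<le> s" "s < t"
  shows "hausdorff_measure t {X. \<exists>Y. sparse_join X Y \<in> B} = 0"
proof (rule hausdorff_measure_eq_0I)
  fix n and e :: real assume "0 < e"
  have "0 < t"
    using assms by linarith
  \<comment> \<open>Stripping at most d L of L positions: (1 - d) t \<ge> s keeps the t-weights below the
    s-weights, and d \<le> 1/2 keeps the stripped lengths above n.\<close>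
  define d where "d = min ((t - s) / t) (1/2)"
  have "0 < d"
    using assms \<open>0 < t\<close> unfolding d_def by auto
  then obtain N where N: "\<And>L. N \<le> L \<Longrightarrow> real (ceillog2 L) \<le> d * real L"
    using eventually_ceillog2_le unfolding eventually_sequentially by blast
  have long: "n \<le> L - ceillog2 L" and shrink: "- t * real (L - ceillog2 L) \<le> - s * real L"
    if "max N (2 * n) \<le> L" for L
    using stripped_length_bounds[OF \<open>0 < t\<close>, of L s] N[of L] that unfolding d_def by auto
  obtain c where c: "B \<subseteq> (\<Union>i. cyl (c i))" "\<And>i. max N (2 * n) \<le> length (c i)"
    "(\<Sum>i. ennreal (2 powr (- s * real (length (c i))))) < ennreal e"
    using hausdorff_measure_eq_0D[OF null \<open>0 < e\<close>] by blast
  have "{X. \<exists>Y. sparse_join X Y \<in> B} \<subseteq> (\<Union>i. cyl (strip_sparse (c i)))"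
    using c(1) sparse_join_in_cyl_imp by blast
  moreover have "n \<le> length (strip_sparse (c i))" for i
    using long c(2) unfolding length_strip_sparse by blast
  moreover have "(\<Sum>i. ennreal (2 powr (- t * real (length (strip_sparse (c i))))))
      \<le> (\<Sum>i. ennreal (2 powr (- s * real (length (c i)))))"
    using shrink c(2) unfolding length_strip_sparse
    by (intro suminf_le summableI ennreal_leI powr_mono) auto
  ultimately show "\<exists>c. {X. \<exists>Y. sparse_join X Y \<in> B} \<subseteq> (\<Union>i. cyl (c i)) \<and>
      (\<forall>i. n \<le> length (c i)) \<and> (\<Sum>i. ennreal (2 powr (- t * real (length (c i))))) \<le> ennreal e"
    using c(3) by (intro exI[of _ "\<lambda>i. strip_sparse (c i)"]) auto
qed

lemma dim_H_sparse_join_preimage: "dim_H {X. \<exists>Y. sparse_join X Y \<in> B} \<le> dim_H B"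
  using hausdorff_measure_sparse_join_preimage
  by (intro dim_H_leI) (auto simp: null_exponents_def)

theorem mainTheorem12:
  fixes B :: "nat set set" and r :: real
  assumes "dim_H Min_deg = r"
    and "maximal_antichain B"
  shows "dim_H B \<ge> r"
proof -
  have "dim_H Min_deg \<le> dim_H {X. \<exists>Y. sparse_join X Y \<in> B}"
    using Min_deg_subset_sparse_join_preimage[OF assms(2)] by (rule dim_H_mono)
  also have "\<dots> \<le> dim_H B"
    by (rule dim_H_sparse_join_preimage)
  finally show ?thesis
    using assms(1) by simp
qed

end
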